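(* Let $(x,b)$ be a \textsc{Set Radius Strip Cover} instance whose optimal lifetime $T$ is positive. Then there is an optimal radial assignment $\rho$ (with lifetime $T$) that is proper, i.e. (1) $\rho_i\in\{0,b_i/T\}$ for every $i$, and (2) for every active sensor $i$ (one with $\rho_i>0$) there is a point $u_i\in[0,1]$ with $u_i\in[x_i-\rho_i,x_i+\rho_i]$ and $u_i\notin[x_k-\rho_k,x_k+\rho_k]$ for every active $k\ne i$.
   Context: \textsc{Set Radius Strip Cover}: An instance is a pair $(x,b)$, where $x=(x_1,\ldots,x_n)\in[0,1]^n$ with $x_1\le\cdots\le x_n$ are sensor locations and $b=(b_1,\ldots,b_n)$, $b_i\ge0$ rational, are battery charges. A solution is a radial assignment $\rho\in[0,\infty)^n$; all sensors are activated at time $0$. Sensor $i$ with $\rho_i>0$ (an active sensor) covers $[x_i-\rho_i,x_i+\rho_i]$ during $[0,b_i/\rho_i]$; a sensor with $\rho_i=0$ is inactive. The lifetime of $\rho$ is the maximum $T$ such that for every $t\in[0,T]$, $[0,1]\subseteq\bigcup_{i:\rho_i>0,\ b_i/\rho_i\ge t}[x_i-\rho_i,x_i+\rho_i]$. An assignment is optimal if it maximizes the lifetime. *)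

theory Defs
  imports Complex_Main
begin

definition srsc_instance :: "nat \<Rightarrow> (nat \<Rightarrow> real) \<Rightarrow> (nat \<Rightarrow> real) \<Rightarrow> bool" where
  "srsc_instance n x b \<longleftrightarrow>
     (\<forall>i<n. 0 \<le> x i \<and> x i \<le> 1) \<and> (\<forall>i j. i \<le> j \<and> j < n \<longrightarrow> x i \<le> x j) \<and>
     (\<forall>i<n. 0 \<le> b i \<and> b i \<in> \<rat>)"

definition radial_assignment :: "nat \<Rightarrow> (nat \<Rightarrow> real) \<Rightarrow> bool" where
  "radial_assignment n \<rho> \<longleftrightarrow> (\<forall>i<n. 0 \<le> \<rho> i)"

definition covered_at :: "nat \<Rightarrow> (nat \<Rightarrow> real) \<Rightarrow> (nat \<Rightarrow> real) \<Rightarrow> (nat \<Rightarrow> real) \<Rightarrow> real \<Rightarrow> bool" where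
  "covered_at n x b \<rho> t \<longleftrightarrow>
     {0..1} \<subseteq> (\<Union>i\<in>{i. i < n \<and> 0 < \<rho> i \<and> t \<le> b i / \<rho> i}. {x i - \<rho> i .. x i + \<rho> i})"

definition is_lifetime :: "nat \<Rightarrow> (nat \<Rightarrow> real) \<Rightarrow> (nat \<Rightarrow> real) \<Rightarrow> (nat \<Rightarrow> real) \<Rightarrow> real \<Rightarrow> bool" where
  "is_lifetime n x b \<rho> T \<longleftrightarrow>
     0 \<le> T \<and> (\<forall>t\<in>{0..T}. covered_at n x b \<rho> t) \<and>
     (\<forall>T'. 0 \<le> T' \<and> (\<forall>t\<in>{0..T'}. covered_at n x b \<rho> t) \<longrightarrow> T' \<le> T)"

definition optimal_lifetime :: "nat \<Rightarrow> (nat \<Rightarrow> real) \<Rightarrow> (nat \<Rightarrow> real) \<Rightarrow> real \<Rightarrow> bool" where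
  "optimal_lifetime n x b T \<longleftrightarrow>
     (\<exists>\<rho>. radial_assignment n \<rho> \<and> is_lifetime n x b \<rho> T) \<and>
     (\<forall>\<rho> T'. radial_assignment n \<rho> \<and> is_lifetime n x b \<rho> T' \<longrightarrow> T' \<le> T)"

definition proper_assignment :: "nat \<Rightarrow> (nat \<Rightarrow> real) \<Rightarrow> (nat \<Rightarrow> real) \<Rightarrow> real \<Rightarrow> (nat \<Rightarrow> real) \<Rightarrow> bool" where
  "proper_assignment n x b T \<rho> \<longleftrightarrow>
     (\<forall>i<n. \<rho> i = 0 \<or> \<rho> i = b i / T) \<and>
     (\<forall>i<n. 0 < \<rho> i \<longrightarrow>
        (\<exists>u\<in>{0..1}. u \<in> {x i - \<rho> i .. x i + \<rho> i} \<and>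
           (\<forall>k<n. k \<noteq> i \<and> 0 < \<rho> k \<longrightarrow> u \<notin> {x k - \<rho> k .. x k + \<rho> k})))"

end

theory Submission
  imports Defs
begin

text \<open>Every sensor alive at time T has radius at most b_i/T, so enlarging all of them to
  exactly b_i/T keeps [0,1] covered, and then every sensor dies exactly at T. A
  minimum-cardinality subfamily of these enlarged intervals that still covers [0,1] is
  irredundant: each of its intervals contains a point of [0,1] missed by all the others,
  which is the private point required of a proper assignment.\<close>

lemma finite_cover_obtains_irredundant_subcover:
  fixes I :: "'i \<Rightarrow> 'a set"
  assumes "finite A" and "U \<subseteq> (\<Union>i\<in>A. I i)"
  obtains S where "S \<subseteq> A" and "U \<subseteq> (\<Union>i\<in>S. I i)"
    and "\<And>i. i \<in> S \<Longrightarrow> \<exists>u\<in>U. u \<in> I i \<and> (\<forall>j\<in>S - {i}. u \<notin> I j)"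
proof -
  let ?subcover = "\<lambda>S. S \<subseteq> A \<and> U \<subseteq> (\<Union>i\<in>S. I i)"
  obtain S where S: "?subcover S" and least: "\<And>S'. ?subcover S' \<Longrightarrow> card S \<le> card S'"
    using ex_has_least_nat[of ?subcover A card] assms(2) by auto
  have "finite S" using S assms(1) finite_subset by blast
  have "\<exists>u\<in>U. u \<in> I i \<and> (\<forall>j\<in>S - {i}. u \<notin> I j)" if "i \<in> S" for i
  proof (rule ccontr)
    assume "\<not> ?thesis"
    then have "?subcover (S - {i})" using S by blast
    moreover have "card (S - {i}) < card S" using \<open>finite S\<close> that by (rule card_Diff1_less)
    ultimately show False using least[of "S - {i}"] by simp
  qed
  with S that show thesis by blast
qed

definition uniform_assignment :: "nat set \<Rightarrow> (nat \<Rightarrow> real) \<Rightarrow> real \<Rightarrow> nat \<Rightarrow> real" where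
  "uniform_assignment S b T i = (if i \<in> S then b i / T else 0)"

context
  fixes n :: nat and x b :: "nat \<Rightarrow> real" and T :: real and S :: "nat set"
  assumes T_pos: "0 < T"
    and S_sensors: "S \<subseteq> {..<n}"
    and S_charged: "\<And>i. i \<in> S \<Longrightarrow> 0 < b i"
begin

lemma uniform_assignment_pos_iff: "0 < uniform_assignment S b T i \<longleftrightarrow> i \<in> S"
  using S_charged T_pos by (simp add: uniform_assignment_def)

lemma uniform_assignment_duration:
  assumes "i \<in> S"
  shows "b i / uniform_assignment S b T i = T"
  using S_charged[OF assms] T_pos assms by (simp add: uniform_assignment_def)

lemma radial_uniform_assignment: "radial_assignment n (uniform_assignment S b T)"
  using S_charged T_pos
  by (auto simp: radial_assignment_def uniform_assignment_def less_imp_le)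

lemma is_lifetime_uniform_assignment:
  assumes cover: "{0..1} \<subseteq> (\<Union>i\<in>S. {x i - b i / T .. x i + b i / T})"
  shows "is_lifetime n x b (uniform_assignment S b T) T"
  unfolding is_lifetime_def
proof (intro conjI allI impI ballI)
  let ?\<rho> = "uniform_assignment S b T"
  show "0 \<le> T" using T_pos by simp
  show "covered_at n x b ?\<rho> t" if "t \<in> {0..T}" for t
    unfolding covered_at_def
  proof
    fix u :: real assume "u \<in> {0..1}"
    then obtain i where "i \<in> S" and u: "u \<in> {x i - b i / T .. x i + b i / T}"
      using cover by blast
    have "i \<in> {i. i < n \<and> 0 < ?\<rho> i \<and> t \<le> b i / ?\<rho> i}"
      using \<open>i \<in> S\<close> \<open>t \<in> {0..T}\<close> S_sensors
      by (auto simp: uniform_assignment_pos_iff uniform_assignment_duration)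
    moreover have "u \<in> {x i - ?\<rho> i .. x i + ?\<rho> i}"
      using u \<open>i \<in> S\<close> by (simp add: uniform_assignment_def)
    ultimately show "u \<in> (\<Union>i\<in>{i. i < n \<and> 0 < ?\<rho> i \<and> t \<le> b i / ?\<rho> i}. {x i - ?\<rho> i .. x i + ?\<rho> i})"
      by blast
  qed
  fix T' assume "0 \<le> T' \<and> (\<forall>t\<in>{0..T'}. covered_at n x b ?\<rho> t)"
  then have "covered_at n x b ?\<rho> T'" by simp
  then have "(0::real) \<in> (\<Union>i\<in>{i. i < n \<and> 0 < ?\<rho> i \<and> T' \<le> b i / ?\<rho> i}. {x i - ?\<rho> i..x i + ?\<rho> i})"
    unfolding covered_at_def by (rule subsetD) simp
  then obtain i where "0 < ?\<rho> i" "T' \<le> b i / ?\<rho> i" by blast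
  then show "T' \<le> T" by (simp add: uniform_assignment_pos_iff uniform_assignment_duration)
qed

lemma proper_uniform_assignment:
  assumes "\<And>i. i \<in> S \<Longrightarrow> \<exists>u\<in>{0..1}. u \<in> {x i - b i / T .. x i + b i / T} \<and>
      (\<forall>j\<in>S - {i}. u \<notin> {x j - b j / T .. x j + b j / T})"
  shows "proper_assignment n x b T (uniform_assignment S b T)"
  unfolding proper_assignment_def
proof (intro conjI allI impI)
  let ?\<rho> = "uniform_assignment S b T"
  show "?\<rho> i = 0 \<or> ?\<rho> i = b i / T" for i by (simp add: uniform_assignment_def)
  fix i assume "0 < ?\<rho> i"
  then have "i \<in> S" by (simp add: uniform_assignment_pos_iff)
  obtain u where u: "u \<in> {0..1}" "u \<in> {x i - b i / T .. x i + b i / T}"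
    and isolated: "\<forall>j\<in>S - {i}. u \<notin> {x j - b j / T .. x j + b j / T}"
    using assms[OF \<open>i \<in> S\<close>] by blast
  show "\<exists>u\<in>{0..1}. u \<in> {x i - ?\<rho> i .. x i + ?\<rho> i} \<and>
      (\<forall>k<n. k \<noteq> i \<and> 0 < ?\<rho> k \<longrightarrow> u \<notin> {x k - ?\<rho> k .. x k + ?\<rho> k})"
  proof (intro bexI conjI allI impI)
    show "u \<in> {x i - ?\<rho> i .. x i + ?\<rho> i}"
      using u(2) \<open>i \<in> S\<close> by (simp add: uniform_assignment_def)
    fix k assume "k < n" "k \<noteq> i \<and> 0 < ?\<rho> k"
    then have "k \<in> S - {i}" by (simp add: uniform_assignment_pos_iff)
    then show "u \<notin> {x k - ?\<rho> k .. x k + ?\<rho> k}"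
      using isolated by (simp add: uniform_assignment_def)
  qed (rule u(1))
qed

end

lemma covered_at_full_radius_by_alive_sensors:
  assumes "0 < T" and "covered_at n x b \<rho> T"
  defines "A \<equiv> {i. i < n \<and> 0 < \<rho> i \<and> T \<le> b i / \<rho> i}"
  shows "{0..1} \<subseteq> (\<Union>i\<in>A. {x i - b i / T .. x i + b i / T})"
    and "\<And>i. i \<in> A \<Longrightarrow> 0 < b i"
proof -
  have alive: "0 < b i \<and> \<rho> i \<le> b i / T" if "i \<in> A" for i
  proof -
    have "0 < \<rho> i" "T * \<rho> i \<le> b i"
      using that by (auto simp: A_def pos_le_divide_eq mult.commute)
    moreover have "0 < T * \<rho> i" using \<open>0 < T\<close> \<open>0 < \<rho> i\<close> by simp
    ultimately have "0 < b i" by linarith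
    moreover have "\<rho> i \<le> b i / T"
      using \<open>0 < T\<close> \<open>T * \<rho> i \<le> b i\<close> by (simp add: pos_le_divide_eq mult.commute)
    ultimately show ?thesis ..
  qed
  then show "0 < b i" if "i \<in> A" for i using that by blast
  show "{0..1} \<subseteq> (\<Union>i\<in>A. {x i - b i / T .. x i + b i / T})"
  proof
    fix u :: real assume "u \<in> {0..1}"
    then obtain i where "i \<in> A" and "u \<in> {x i - \<rho> i .. x i + \<rho> i}"
      using assms(2) unfolding covered_at_def A_def by blast
    moreover have "{x i - \<rho> i .. x i + \<rho> i} \<subseteq> {x i - b i / T .. x i + b i / T}"
      using alive[OF \<open>i \<in> A\<close>] by auto
    ultimately show "u \<in> (\<Union>i\<in>A. {x i - b i / T .. x i + b i / T})" by blast
  qed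
qed

theorem lemma10:
  fixes n :: nat and x b :: "nat \<Rightarrow> real" and T :: real
  assumes "srsc_instance n x b"
    and "optimal_lifetime n x b T"
    and "0 < T"
  shows "\<exists>\<rho>. radial_assignment n \<rho> \<and> is_lifetime n x b \<rho> T \<and> proper_assignment n x b T \<rho>"
proof -
  obtain \<rho>\<^sub>0 where "is_lifetime n x b \<rho>\<^sub>0 T"
    using assms(2) unfolding optimal_lifetime_def by blast
  then have covered: "covered_at n x b \<rho>\<^sub>0 T" unfolding is_lifetime_def by simp
  define A where "A = {i. i < n \<and> 0 < \<rho>\<^sub>0 i \<and> T \<le> b i / \<rho>\<^sub>0 i}"
  have "finite A" by (simp add: A_def)
  note alive = covered_at_full_radius_by_alive_sensors[OF \<open>0 < T\<close> covered, folded A_def]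
  obtain S where "S \<subseteq> A"
    and cover: "{0..1} \<subseteq> (\<Union>i\<in>S. {x i - b i / T .. x i + b i / T})"
    and isolated: "\<And>i. i \<in> S \<Longrightarrow> \<exists>u\<in>{0..1}. u \<in> {x i - b i / T .. x i + b i / T} \<and>
        (\<forall>j\<in>S - {i}. u \<notin> {x j - b j / T .. x j + b j / T})"
    using finite_cover_obtains_irredundant_subcover[OF \<open>finite A\<close> alive(1)] by blast
  have "S \<subseteq> {..<n}" and charged: "\<And>i. i \<in> S \<Longrightarrow> 0 < b i"
    using \<open>S \<subseteq> A\<close> alive(2) by (auto simp: A_def)
  note uniform = \<open>0 < T\<close> \<open>S \<subseteq> {..<n}\<close> charged
  show ?thesis
  proof (intro exI conjI)
    show "radial_assignment n (uniform_assignment S b T)"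
      using uniform by (rule radial_uniform_assignment)
    show "is_lifetime n x b (uniform_assignment S b T) T"
      using uniform cover by (rule is_lifetime_uniform_assignment)
    show "proper_assignment n x b T (uniform_assignment S b T)"
      using uniform isolated by (rule proper_uniform_assignment)
  qed
qed

end
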